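(* Let $(G,\cdot)$ be a two-step nilpotent group, $n$ a nonzero integer, and define $a\circ b=a\cdot a^{-n}ba^{n}$ for $a,b\in G$. Then $(G,\cdot,\circ)$ is a $\lambda$-homomorphic skew left brace; that is, the map $\lambda\colon(G,\cdot)\to\operatorname{Aut}(G,\cdot)$, $\lambda_a(b)=a^{-1}\cdot(a\circ b)=a^{-n}ba^{n}$, is a group homomorphism.
   Context: A two-step nilpotent group is a group of nilpotency class at most $2$, i.e. all commutators $[a,b]=a^{-1}b^{-1}ab$ are central. A skew left brace is a triple $(G,\cdot,\circ)$ where $(G,\cdot)$ and $(G,\circ)$ are groups on the same set with $a\circ(b\cdot c)=(a\circ b)\cdot a^{-1}\cdot(a\circ c)$ for all $a,b,c$. Its $\lambda$-map is $\lambda_a(b)=a^{-1}\cdot(a\circ b)$, and it is $\lambda$-homomorphic if $\lambda\colon(G,\cdot)\to\operatorname{Aut}(G,\cdot)$ is a group homomorphism. *)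

theory Defs
  imports "HOL-Algebra.Algebra"
begin

definition commutator :: "('a, 'b) monoid_scheme \<Rightarrow> 'a \<Rightarrow> 'a \<Rightarrow> 'a" where
  "commutator G a b = inv\<^bsub>G\<^esub> a \<otimes>\<^bsub>G\<^esub> inv\<^bsub>G\<^esub> b \<otimes>\<^bsub>G\<^esub> a \<otimes>\<^bsub>G\<^esub> b"

definition two_step_nilpotent :: "('a, 'b) monoid_scheme \<Rightarrow> bool" where
  "two_step_nilpotent G \<longleftrightarrow> group G \<and>
     (\<forall>a\<in>carrier G. \<forall>b\<in>carrier G. \<forall>c\<in>carrier G.
        commutator G a b \<otimes>\<^bsub>G\<^esub> c = c \<otimes>\<^bsub>G\<^esub> commutator G a b)"

definition skew_left_brace :: "('a, 'b) monoid_scheme \<Rightarrow> ('a \<Rightarrow> 'a \<Rightarrow> 'a) \<Rightarrow> bool" where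
  "skew_left_brace G circ \<longleftrightarrow> group G \<and>
     (\<exists>e. group \<lparr>carrier = carrier G, monoid.mult = circ, one = e\<rparr>) \<and>
     (\<forall>a\<in>carrier G. \<forall>b\<in>carrier G. \<forall>c\<in>carrier G.
        circ a (b \<otimes>\<^bsub>G\<^esub> c) = circ a b \<otimes>\<^bsub>G\<^esub> inv\<^bsub>G\<^esub> a \<otimes>\<^bsub>G\<^esub> circ a c)"

definition lambda_map :: "('a, 'b) monoid_scheme \<Rightarrow> ('a \<Rightarrow> 'a \<Rightarrow> 'a) \<Rightarrow> 'a \<Rightarrow> 'a \<Rightarrow> 'a" where
  "lambda_map G circ a = (\<lambda>b\<in>carrier G. inv\<^bsub>G\<^esub> a \<otimes>\<^bsub>G\<^esub> circ a b)"

definition lambda_homomorphic_skew_brace :: "('a, 'b) monoid_scheme \<Rightarrow> ('a \<Rightarrow> 'a \<Rightarrow> 'a) \<Rightarrow> bool" where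
  "lambda_homomorphic_skew_brace G circ \<longleftrightarrow>
     skew_left_brace G circ \<and> lambda_map G circ \<in> hom G (AutoGroup G)"

end

theory Submission
  imports Defs
begin

text \<open>Write \<open>\<iota>\<close> for the homomorphism \<open>G \<rightarrow> Aut G\<close> sending \<open>g\<close> to conjugation by \<open>g\<close>;
  then \<open>\<lambda>\<^sub>a = \<iota>(a^(-n))\<close>. In class at most 2 the element \<open>xy\<close> is \<open>yx\<close> times a central
  commutator, so \<open>\<iota>(xy) = \<iota>(yx)\<close>: the image of \<open>\<iota>\<close> is abelian. Hence \<open>a \<mapsto> \<iota>(a)^(-n)\<close> is
  again a homomorphism, and it is constant on conjugacy classes, i.e. \<open>\<lambda>\<^bsub>\<lambda>\<^sub>a(b)\<^esub> = \<lambda>\<^sub>b\<close>.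
  For any homomorphism \<open>\<lambda> : G \<rightarrow> Aut G\<close> with this invariance, \<open>a \<circ> b = a \<lambda>\<^sub>a(b)\<close> is a skew
  left brace, since associativity amounts to \<open>\<lambda>\<^bsub>a \<lambda>\<^sub>a(b)\<^esub> = \<lambda>\<^sub>a \<lambda>\<^sub>b\<close>.\<close>

definition inner_aut :: "('a, 'b) monoid_scheme \<Rightarrow> 'a \<Rightarrow> 'a \<Rightarrow> 'a" where
  "inner_aut G g = (\<lambda>h\<in>carrier G. g \<otimes>\<^bsub>G\<^esub> h \<otimes>\<^bsub>G\<^esub> inv\<^bsub>G\<^esub> g)"

context group
begin

lemma mult_inv_cancel_left [simp]:
  "x \<in> carrier G \<Longrightarrow> y \<in> carrier G \<Longrightarrow> x \<otimes> (inv x \<otimes> y) = y"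
  by (simp add: m_assoc[symmetric])

context
  fixes L :: "'a \<Rightarrow> 'a \<Rightarrow> 'a"
  assumes L_hom: "L \<in> hom G (AutoGroup G)"
begin

lemma auto_hom_in_auto: "a \<in> carrier G \<Longrightarrow> L a \<in> auto G"
  using L_hom by (auto simp: hom_def AutoGroup_def)

lemma auto_hom_closed [simp]: "a \<in> carrier G \<Longrightarrow> x \<in> carrier G \<Longrightarrow> L a x \<in> carrier G"
  using auto_hom_in_auto by (auto simp: auto_def hom_def)

lemma auto_hom_apply_mult:
  "a \<in> carrier G \<Longrightarrow> x \<in> carrier G \<Longrightarrow> y \<in> carrier G \<Longrightarrow> L a (x \<otimes> y) = L a x \<otimes> L a y"
  using auto_hom_in_auto by (auto simp: auto_def hom_def)

lemma auto_hom_apply_one: "a \<in> carrier G \<Longrightarrow> L a \<one> = \<one>"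
  using auto_hom_in_auto by (simp add: auto_def hom_one)

lemma auto_hom_mult_apply:
  assumes "a \<in> carrier G" "b \<in> carrier G" "x \<in> carrier G"
  shows "L (a \<otimes> b) x = L a (L b x)"
proof -
  have "L (a \<otimes> b) = L a \<otimes>\<^bsub>AutoGroup G\<^esub> L b"
    using L_hom assms by (simp add: hom_mult)
  then show ?thesis
    using assms auto_hom_in_auto by (simp add: AutoGroup_def BijGroup_def auto_def compose_def)
qed

lemma auto_hom_one_apply: "x \<in> carrier G \<Longrightarrow> L \<one> x = x"
proof -
  have "L \<one> = \<one>\<^bsub>AutoGroup G\<^esub>"
    using L_hom AutoGroup
    by (simp add: group_hom.hom_one group_hom_axioms_def group_hom_def is_group)
  then show "x \<in> carrier G \<Longrightarrow> L \<one> x = x"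
    by (simp add: AutoGroup_def BijGroup_def)
qed

context
  fixes circ :: "'a \<Rightarrow> 'a \<Rightarrow> 'a"
  assumes circ_eq: "\<And>a b. a \<in> carrier G \<Longrightarrow> b \<in> carrier G \<Longrightarrow> circ a b = a \<otimes> L a b"
    and L_invariant: "\<And>a b. a \<in> carrier G \<Longrightarrow> b \<in> carrier G \<Longrightarrow> L (L a b) = L b"
begin

lemma group_of_auto_hom: "group \<lparr>carrier = carrier G, monoid.mult = circ, one = \<one>\<rparr>"
proof (rule groupI; simp)
  fix a b c assume abc: "a \<in> carrier G" "b \<in> carrier G" "c \<in> carrier G"
  show "circ a b \<in> carrier G" using abc by (simp add: circ_eq)
  have "circ (circ a b) c = a \<otimes> L a b \<otimes> L a (L (L a b) c)"
    using abc by (simp add: circ_eq auto_hom_mult_apply)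
  also have "\<dots> = circ a (circ b c)"
    using abc by (simp add: circ_eq L_invariant auto_hom_apply_mult m_assoc)
  finally show "circ (circ a b) c = circ a (circ b c)" .
next
  fix x assume x: "x \<in> carrier G"
  show "circ \<one> x = x" using x by (simp add: circ_eq auto_hom_one_apply)
  \<comment> \<open>The \<open>\<circ>\<close>-inverse of \<open>x\<close> is \<open>(L x)\<inverse>(x\<inverse>) = L (inv x) (inv x)\<close>.\<close>
  let ?y = "L (inv x) (inv x)"
  have "circ ?y x = ?y \<otimes> L (inv x) x"
    using x by (simp add: circ_eq L_invariant)
  also have "\<dots> = L (inv x) (inv x \<otimes> x)"
    using x auto_hom_apply_mult[of "inv x" "inv x" x] by simp
  also have "\<dots> = \<one>"
    using x by (simp add: auto_hom_apply_one)
  finally have "circ ?y x = \<one>" .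
  then show "\<exists>y\<in>carrier G. circ y x = \<one>" using x by (metis auto_hom_closed inv_closed)
qed

lemma skew_left_brace_of_auto_hom: "skew_left_brace G circ"
  unfolding skew_left_brace_def
proof (intro conjI ballI exI)
  show "group \<lparr>carrier = carrier G, monoid.mult = circ, one = \<one>\<rparr>" by (rule group_of_auto_hom)
  fix a b c assume abc: "a \<in> carrier G" "b \<in> carrier G" "c \<in> carrier G"
  then show "circ a (b \<otimes> c) = circ a b \<otimes> inv a \<otimes> circ a c"
    by (simp add: circ_eq auto_hom_apply_mult m_assoc inv_solve_left)
qed (rule is_group)

lemma lambda_map_of_auto_hom: "a \<in> carrier G \<Longrightarrow> lambda_map G circ a = L a"
  using auto_hom_in_auto[of a]
  by (auto simp: lambda_map_def circ_eq m_assoc[symmetric] auto_def Bij_def extensional_def)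

lemma lambda_homomorphic_skew_brace_of_auto_hom: "lambda_homomorphic_skew_brace G circ"
  unfolding lambda_homomorphic_skew_brace_def
  using skew_left_brace_of_auto_hom hom_restrict[OF L_hom] lambda_map_of_auto_hom by simp

end

end

lemma inner_aut_apply [simp]: "h \<in> carrier G \<Longrightarrow> inner_aut G g h = g \<otimes> h \<otimes> inv g"
  by (simp add: inner_aut_def)

lemma inner_aut_in_auto:
  assumes g: "g \<in> carrier G"
  shows "inner_aut G g \<in> auto G"
proof -
  have "inner_aut G g \<in> Bij (carrier G)"
    using hom_carrier[OF conjugation_is_hom] g by (auto simp: inner_aut_def BijGroup_def)
  moreover have "inner_aut G g \<in> hom G G"
    using g by (intro homI) (simp_all add: m_assoc inv_solve_left)
  ultimately show ?thesis by (simp add: auto_def)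
qed

lemma inner_aut_hom: "inner_aut G \<in> hom G (AutoGroup G)"
proof (rule homI)
  show "inner_aut G g \<in> carrier (AutoGroup G)" if "g \<in> carrier G" for g
    using inner_aut_in_auto that by (simp add: AutoGroup_def)
  show "inner_aut G (x \<otimes> y) = inner_aut G x \<otimes>\<^bsub>AutoGroup G\<^esub> inner_aut G y"
    if "x \<in> carrier G" "y \<in> carrier G" for x y
    using hom_mult[OF conjugation_is_hom that] by (simp add: inner_aut_def AutoGroup_def)
qed

lemma inner_aut_mult_central:
  assumes g: "g \<in> carrier G" and z: "z \<in> carrier G"
    and central: "\<forall>h\<in>carrier G. z \<otimes> h = h \<otimes> z"
  shows "inner_aut G (g \<otimes> z) = inner_aut G g"
  unfolding inner_aut_def
proof (rule restrict_ext)
  fix h assume h: "h \<in> carrier G"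
  have "g \<otimes> z \<otimes> h \<otimes> inv (g \<otimes> z) = g \<otimes> (z \<otimes> h) \<otimes> inv z \<otimes> inv g"
    using g z h by (simp add: inv_mult_group m_assoc)
  also have "\<dots> = g \<otimes> h \<otimes> inv g"
    using g z h central by (simp add: m_assoc)
  finally show "g \<otimes> z \<otimes> h \<otimes> inv (g \<otimes> z) = g \<otimes> h \<otimes> inv g" .
qed

context
  assumes nil: "two_step_nilpotent G"
begin

lemma inner_aut_mult_commutator:
  assumes "g \<in> carrier G" "x \<in> carrier G" "y \<in> carrier G"
  shows "inner_aut G (g \<otimes> commutator G x y) = inner_aut G g"
  using assms nil by (simp add: inner_aut_mult_central two_step_nilpotent_def commutator_def)

lemma inner_aut_commute:
  assumes x: "x \<in> carrier G" and y: "y \<in> carrier G"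
  shows "inner_aut G x \<otimes>\<^bsub>AutoGroup G\<^esub> inner_aut G y
       = inner_aut G y \<otimes>\<^bsub>AutoGroup G\<^esub> inner_aut G x"
proof -
  have "x \<otimes> y = y \<otimes> x \<otimes> commutator G x y"
    using x y by (simp add: commutator_def m_assoc inv_solve_left)
  then have "inner_aut G (x \<otimes> y) = inner_aut G (y \<otimes> x)"
    using x y by (simp add: inner_aut_mult_commutator)
  then show ?thesis
    using x y by (simp add: hom_mult[OF inner_aut_hom])
qed

lemma inner_aut_conj:
  assumes g: "g \<in> carrier G" and c: "c \<in> carrier G"
  shows "inner_aut G (g \<otimes> c \<otimes> inv g) = inner_aut G c"
proof -
  have "g \<otimes> c \<otimes> inv g = c \<otimes> commutator G c (inv g)"
    using g c by (simp add: commutator_def m_assoc inv_solve_left)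
  then show ?thesis
    using g c by (simp add: inner_aut_mult_commutator)
qed

lemma inner_aut_pow_hom: "(\<lambda>a. inner_aut G (a [^] (k::int))) \<in> hom G (AutoGroup G)"
proof (rule homI)
  interpret inner: group_hom G "AutoGroup G" "inner_aut G"
    by (simp add: group_hom_def group_hom_axioms_def AutoGroup is_group inner_aut_hom)
  show "inner_aut G (a [^] k) \<in> carrier (AutoGroup G)" if "a \<in> carrier G" for a
    using that by simp
  fix a b assume a: "a \<in> carrier G" and b: "b \<in> carrier G"
  have "inner_aut G ((a \<otimes> b) [^] k)
      = (inner_aut G a \<otimes>\<^bsub>AutoGroup G\<^esub> inner_aut G b) [^]\<^bsub>AutoGroup G\<^esub> k"
    using a b by (simp add: inner.hom_int_pow)
  also have "\<dots> = inner_aut G (a [^] k) \<otimes>\<^bsub>AutoGroup G\<^esub> inner_aut G (b [^] k)"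
    using a b by (simp add: inner.H.int_pow_mult_distrib inner_aut_commute inner.hom_int_pow)
  finally show "inner_aut G ((a \<otimes> b) [^] k)
      = inner_aut G (a [^] k) \<otimes>\<^bsub>AutoGroup G\<^esub> inner_aut G (b [^] k)" .
qed

lemma inner_aut_pow_invariant:
  assumes g: "g \<in> carrier G" and b: "b \<in> carrier G"
  shows "inner_aut G ((inner_aut G g b) [^] (k::int)) = inner_aut G (b [^] k)"
proof -
  have "(inner_aut G g b) [^] k = inner_aut G g (b [^] k)"
    by (rule hom_int_pow[symmetric])
      (use inner_aut_in_auto[OF g] b in \<open>simp_all add: auto_def is_group\<close>)
  then show ?thesis
    using g b by (simp add: inner_aut_conj)
qed

end

end

theorem proposition5p5:
  fixes G (structure) and n :: int
  assumes "group G" and "two_step_nilpotent G" and "n \<noteq> 0"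
  defines "circ \<equiv> \<lambda>a b. a \<otimes> (a [^] (- n) \<otimes> b \<otimes> a [^] n)"
  shows "lambda_homomorphic_skew_brace G circ \<and>
         (\<forall>a\<in>carrier G. \<forall>b\<in>carrier G. lambda_map G circ a b = a [^] (- n) \<otimes> b \<otimes> a [^] n)"
proof -
  interpret group G by fact
  let ?L = "\<lambda>a. inner_aut G (a [^] (- n))"
  have L_apply: "?L a b = a [^] (- n) \<otimes> b \<otimes> a [^] n"
    if "a \<in> carrier G" "b \<in> carrier G" for a b
    using that by (simp add: int_pow_neg)
  have circ_eq: "circ a b = a \<otimes> ?L a b" if "a \<in> carrier G" "b \<in> carrier G" for a b
    using that by (simp add: circ_def int_pow_neg)
  have L_hom: "?L \<in> hom G (AutoGroup G)"
    using assms(2) by (rule inner_aut_pow_hom)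
  have L_invariant: "?L (?L a b) = ?L b" if "a \<in> carrier G" "b \<in> carrier G" for a b
    using assms(2) that by (simp add: inner_aut_pow_invariant del: inner_aut_apply)
  show ?thesis
    using lambda_homomorphic_skew_brace_of_auto_hom[OF L_hom circ_eq L_invariant]
      lambda_map_of_auto_hom[OF L_hom circ_eq L_invariant] L_apply
    by simp
qed

end
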